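(* Let $k>0$, $M>0$, $\beta\in\,]0,\tfrac12[$, $0<\sigma_0\le\min\{1,\frac{3\beta^3}{4\pi M^2}\}$, and let $P_0=\max\{10,(\frac{1+M}{4\pi})^{4/3},\frac{64(k+1)^2}{1-2\beta},\frac{256(k+1)^2M^4}{(1-2\beta)^2}\}$. Let $(f_n)\subset\mathcal A$ be a sequence with $\lim_{n\to\infty}\mathcal D(f_n)=\inf_{f\in\mathcal A}\mathcal D(f)$, such that $0\le f_n\le1$ for all $n$, such that $$\int_{\mathbb R^3}\int_{|v|\ge P+1}\sqrt{1+|v|^2}\,f_n\,dx\,dv\le\frac{2}{P^{1/4}}\quad\text{for all } n\in\mathbb N,\ P\ge P_0+1,$$ and such that $f_n\rightharpoonup f_0$ weakly in $L^{1+1/k}(\mathbb R^3\times\mathbb R^3)$. Then: (i) $0\le f_0\le1$; (ii) $f_0$ is spherically symmetric; (iii) $\int_{\mathbb R^3}\int_{|v|\ge P+1}\sqrt{1+|v|^2}f_0\,dx\,dv\le\frac{2}{P^{1/4}}$ for $P\ge P_0+1$; (iv) $m_{f_n}(r)\to m_{f_0}(r)$ as $n\to\infty$ for $r\in[0,\infty[$, in particular $m_{f_0}(r)/r\le\beta$ for $r\in\,]0,\infty[$; (v) $\rho_{f_0}(r)\le\sigma_0$ for $r\in[0,\infty[$; (vi) $\lambda_{f_n}(r)\to\lambda_{f_0}(r)$ as $n\to\infty$ for $r\in[0,\infty[$.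
   Context: Let $\chi(s)=\frac{k}{k+1}s^{1+1/k}$. A measurable $f\ge0$ on $\mathbb R^3\times\mathbb R^3$ is spherically symmetric if $f(Ax,Av)=f(x,v)$ for all $A\in SO(3)$. For such $f$: $\rho_f(x)=\int\sqrt{1+|v|^2}f(x,v)\,dv$ (radial, written $\rho_f(r)$), $m_f(r)=\int_{|x|\le r}\int\sqrt{1+|v|^2}f\,dx\,dv$, $\lambda_f$ given by $e^{-2\lambda_f(r)}=1-2m_f(r)/r$ (when $2m_f/r<1$), and $\mathcal D(f)=\int\int e^{\lambda_f(|x|)}(\chi(f)-f)\,dx\,dv$. $\mathcal A$ is the set of measurable spherically symmetric $f\ge0$ with $\int\int\sqrt{1+|v|^2}f\,dx\,dv=M$ and $\rho_f(r)\le\sigma_0$ for all $r\ge0$. *)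

theory Defs
  imports "HOL-Analysis.Analysis"
begin

type_synonym phase = "(real^3) \<times> (real^3)"

definition chi :: "real \<Rightarrow> real \<Rightarrow> real" where
  "chi k s = k / (k + 1) * s powr (1 + 1 / k)"

definition SO3 :: "(real^3^3) set" where
  "SO3 = {A. orthogonal_matrix A \<and> det A = 1}"

definition spherically_symmetric :: "(phase \<Rightarrow> real) \<Rightarrow> bool" where
  "spherically_symmetric f \<longleftrightarrow> (\<forall>A\<in>SO3. \<forall>x v. f (A *v x, A *v v) = f (x, v))"

definition rho :: "(phase \<Rightarrow> real) \<Rightarrow> real^3 \<Rightarrow> ennreal" where
  "rho f x = (\<integral>\<^sup>+ v. ennreal (sqrt (1 + (norm v)\<^sup>2) * f (x, v)) \<partial>lebesgue)"

definition mass_fn :: "(phase \<Rightarrow> real) \<Rightarrow> real \<Rightarrow> real" where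
  "mass_fn f r = enn2real (\<integral>\<^sup>+ z. ennreal (indicator {z. norm (fst z) \<le> r} z
        * sqrt (1 + (norm (snd z))\<^sup>2) * f z) \<partial>lebesgue)"

text \<open>\<open>\<lambda>_f\<close> defined by \<open>e^{-2\<lambda>_f(r)} = 1 - 2 m_f(r)/r\<close>; at \<open>r = 0\<close> the formula gives
  \<open>\<lambda>_f(0) = 0\<close> since \<open>x / 0 = 0\<close> in Isabelle.\<close>
definition lambda_fn :: "(phase \<Rightarrow> real) \<Rightarrow> real \<Rightarrow> real" where
  "lambda_fn f r = - ln (1 - 2 * mass_fn f r / r) / 2"

text \<open>\<open>\<D>(f) = \<integral>\<integral> e^{\<lambda>_f(|x|)} (\<chi>(f) - f)\<close>, computed in the extended reals as the difference
  of the two nonnegative integrals (the first may be \<open>+\<infinity>\<close>).\<close>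
definition Dfun :: "real \<Rightarrow> (phase \<Rightarrow> real) \<Rightarrow> ereal" where
  "Dfun k f =
     enn2ereal (\<integral>\<^sup>+ z. ennreal (exp (lambda_fn f (norm (fst z))) * chi k (f z)) \<partial>lebesgue)
   - enn2ereal (\<integral>\<^sup>+ z. ennreal (exp (lambda_fn f (norm (fst z))) * f z) \<partial>lebesgue)"

definition admissible :: "real \<Rightarrow> real \<Rightarrow> (phase \<Rightarrow> real) \<Rightarrow> bool" where
  "admissible M \<sigma>0 f \<longleftrightarrow>
     f \<in> borel_measurable lebesgue \<and> (\<forall>z. 0 \<le> f z) \<and> spherically_symmetric f \<and>
     (\<integral>\<^sup>+ z. ennreal (sqrt (1 + (norm (snd z))\<^sup>2) * f z) \<partial>lebesgue) = ennreal M \<and>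
     (\<forall>x. rho f x \<le> ennreal \<sigma>0)"

definition in_Lp :: "real \<Rightarrow> (phase \<Rightarrow> real) \<Rightarrow> bool" where
  "in_Lp p f \<longleftrightarrow> f \<in> borel_measurable lebesgue \<and> integrable lebesgue (\<lambda>z. \<bar>f z\<bar> powr p)"

definition weak_Lp_conv :: "real \<Rightarrow> (nat \<Rightarrow> phase \<Rightarrow> real) \<Rightarrow> (phase \<Rightarrow> real) \<Rightarrow> bool" where
  "weak_Lp_conv p fs f0 \<longleftrightarrow>
     (\<forall>n. in_Lp p (fs n)) \<and> in_Lp p f0 \<and>
     (\<forall>g. in_Lp (p / (p - 1)) g \<longrightarrow>
        (\<lambda>n. \<integral>z. fs n z * g z \<partial>lebesgue) \<longlonglongrightarrow> (\<integral>z. f0 z * g z \<partial>lebesgue))"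

end

theory Submission
  imports Defs
begin

(*
  Since 0 <= f_n <= 1 with bounded total mass, the weak limit f_0 lies in [0,1] a.e. and is
  integrable, so u_n = f_n - f_0 is bounded in L^2 and, testing weak convergence against u_m,
  (u_n, u_m) -> 0 for every fixed m.  A subsequence whose terms are almost orthogonal to all
  earlier ones has dyadic means (the means of its first 2^m terms) of squared L^2 norm O(2^-m),
  so these means converge to f_0 almost everywhere (Banach-Saks).  Their pointwise limit g is a
  spherically symmetric representative of f_0, and Fatou's lemma passes every weighted bound
  of the f_n on to g: 0 <= g <= 1, the velocity tails, the total mass M and rho_g <= sigma_0.
  Testing weak convergence against the bounded, compactly supported truncation of
  sqrt(1 + |v|^2) 1_{|x| <= r} and controlling the rest by the uniform tail bound gives
  m_{f_n}(r) -> m_g(r).  Finally m_g(r) <= min (M, 4/3 pi sigma_0 r^3) together with the choice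
  of sigma_0 gives m_g(r)/r <= beta < 1/2, and lambda converges by continuity.
*)

section \<open>Lebesgue measure on Euclidean spaces\<close>

lemma sets_lebesgue_cball: "cball (c::'a::euclidean_space) r \<in> sets lebesgue"
  using lmeasurable_cball by (rule fmeasurableD)

lemma integrable_indicator_bounded:
  fixes S :: "'a::euclidean_space set"
  assumes "S \<in> sets lebesgue" "bounded S"
  shows "integrable lebesgue (indicator S :: 'a \<Rightarrow> real)"
  using bounded_set_imp_lmeasurable[OF assms(2,1)] by (auto simp: fmeasurable_def)

lemma sigma_finite_measure_lebesgue:
  "sigma_finite_measure (lebesgue :: 'a::euclidean_space measure)"
proof
  have "\<Union>(range (\<lambda>n::nat. cball (0::'a) (real n))) = UNIV"
    by (auto intro: real_arch_simple)
  then show "\<exists>A. countable A \<and> A \<subseteq> sets (lebesgue :: 'a measure) \<and> \<Union>A = space lebesgue \<and>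
      (\<forall>a\<in>A. emeasure lebesgue a \<noteq> \<infinity>)"
    by (intro exI[of _ "range (\<lambda>n::nat. cball (0::'a) (real n))"])
       (use emeasure_lborel_cball_finite in \<open>auto simp: less_top\<close>)
qed

lemma AE_nonneg_if_bounded_set_integrals_nonneg:
  fixes f :: "'a::euclidean_space \<Rightarrow> real"
  assumes int: "\<And>S. S \<in> sets lebesgue \<Longrightarrow> bounded S \<Longrightarrow> integrable lebesgue (\<lambda>z. f z * indicator S z)"
    and nonneg: "\<And>S. S \<in> sets lebesgue \<Longrightarrow> bounded S \<Longrightarrow> 0 \<le> (\<integral>z. f z * indicator S z \<partial>lebesgue)"
  shows "AE z in lebesgue. 0 \<le> f z"
proof -
  have "AE z in lebesgue. 0 \<le> f z * indicator (cball 0 (real R)) z" for R :: nat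
  proof (rule sigma_finite_measure.density_nonneg[OF sigma_finite_measure_lebesgue])
    show "integrable lebesgue (\<lambda>z. f z * indicator (cball 0 (real R)) z)"
      by (rule int) auto
    fix A :: "'a set" assume "A \<in> sets lebesgue"
    then have "0 \<le> (\<integral>z. f z * indicator (A \<inter> cball 0 (real R)) z \<partial>lebesgue)"
      by (intro nonneg) auto
    then show "0 \<le> set_lebesgue_integral lebesgue A (\<lambda>z. f z * indicator (cball 0 (real R)) z)"
      unfolding set_lebesgue_integral_def by (simp add: indicator_inter_arith ac_simps)
  qed
  then have "AE z in lebesgue. \<forall>R::nat. 0 \<le> f z * indicator (cball 0 (real R)) z"
    by (simp add: AE_all_countable)
  then show ?thesis
  proof eventually_elim
    case (elim z)
    obtain R :: nat where "norm z \<le> real R"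
      using real_arch_simple by blast
    then show ?case
      using elim[rule_format, of R] by simp
  qed
qed

lemma nn_integral_lebesgue_SUP_cball:
  fixes f :: "'a::euclidean_space \<Rightarrow> ennreal"
  assumes f: "f \<in> borel_measurable lebesgue"
  shows "(\<integral>\<^sup>+z. f z \<partial>lebesgue) = (SUP R::nat. \<integral>\<^sup>+z\<in>cball 0 (real R). f z \<partial>lebesgue)"
proof -
  have sup: "(SUP R::nat. f z * indicator (cball 0 (real R)) z) = f z" for z
  proof (rule antisym)
    show "(SUP R::nat. f z * indicator (cball 0 (real R)) z) \<le> f z"
      by (intro SUP_least) (simp split: split_indicator)
    obtain R :: nat where "norm z \<le> real R"
      using real_arch_simple by blast
    then show "f z \<le> (SUP R::nat. f z * indicator (cball 0 (real R)) z)"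
      by (intro SUP_upper2[of R]) auto
  qed
  have "incseq (\<lambda>R::nat. \<lambda>z. f z * indicator (cball 0 (real R)) z)"
    by (intro monoI le_funI mult_left_mono) (auto split: split_indicator)
  then have "(SUP R::nat. \<integral>\<^sup>+z\<in>cball 0 (real R). f z \<partial>lebesgue)
      = (\<integral>\<^sup>+z. (SUP R::nat. f z * indicator (cball 0 (real R)) z) \<partial>lebesgue)"
    using f by (intro nn_integral_monotone_convergence_SUP[symmetric] borel_measurable_times_ennreal
        borel_measurable_indicator sets_lebesgue_cball)
  then show ?thesis
    by (simp add: sup)
qed

lemma borel_measurable_lebesgue_continuous_on:
  "continuous_on UNIV f \<Longrightarrow> f \<in> borel_measurable (lebesgue :: 'a::euclidean_space measure)"
  using measurable_completion[of f lborel borel] borel_measurable_continuous_onI[of f] by simp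

lemma borel_measurable_norm_fst [measurable]:
  "(\<lambda>z::'a::euclidean_space \<times> 'b::euclidean_space. norm (fst z)) \<in> borel_measurable lebesgue"
  by (intro borel_measurable_lebesgue_continuous_on continuous_intros)

lemma borel_measurable_norm_snd [measurable]:
  "(\<lambda>z::'a::euclidean_space \<times> 'b::euclidean_space. norm (snd z)) \<in> borel_measurable lebesgue"
  by (intro borel_measurable_lebesgue_continuous_on continuous_intros)

lemma lebesgue_pair_borel_representative:
  fixes h :: "'a::euclidean_space \<times> 'b::euclidean_space \<Rightarrow> real"
  assumes "h \<in> borel_measurable lebesgue"
  obtains h' where "h' \<in> borel_measurable (lborel \<Otimes>\<^sub>M lborel)"
    "AE z in lebesgue. h z = h' z" "AE x in lborel. AE v in lborel. h (x, v) = h' (x, v)"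
proof -
  obtain h' where h': "h' \<in> borel_measurable lborel" "AE z in lborel. h z = h' z"
    using completion_ex_borel_measurable_real[OF assms] by blast
  have "h' \<in> borel_measurable (lborel \<Otimes>\<^sub>M lborel)"
    by (subst lborel_prod) (rule h'(1))
  moreover have "AE z in lborel \<Otimes>\<^sub>M lborel. h z = h' z"
    by (subst lborel_prod) (rule h'(2))
  then have "AE x in lborel. AE v in lborel. h (x, v) = h' (x, v)"
    by (rule lborel_pair.AE_pair)
  ultimately show ?thesis
    using that AE_completion[OF h'(2)] by blast
qed

lemma AE_section_measurable:
  fixes h :: "'a::euclidean_space \<times> 'b::euclidean_space \<Rightarrow> real"
  assumes "h \<in> borel_measurable lebesgue"
  shows "AE x in lborel. (\<lambda>v. h (x, v)) \<in> borel_measurable lebesgue"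
proof -
  obtain h' where h': "h' \<in> borel_measurable (lborel \<Otimes>\<^sub>M lborel)"
    and ae: "AE x in lborel. AE v in lborel. h (x, v) = h' (x, v)"
    using lebesgue_pair_borel_representative[OF assms] by blast
  from ae show ?thesis
  proof eventually_elim
    case (elim x)
    have "(\<lambda>v. h' (x, v)) \<in> borel_measurable lebesgue"
      using measurable_Pair2[OF h', of x] by (simp add: measurable_completion)
    moreover have "AE v in lebesgue. h' (x, v) = h (x, v)"
      using elim by (intro AE_completion) (auto elim: eventually_mono)
    ultimately show ?case
      by (rule borel_measurable_AE)
  qed
qed

lemma nn_integral_lebesgue_pair:
  fixes h :: "'a::euclidean_space \<times> 'b::euclidean_space \<Rightarrow> real"
  assumes "h \<in> borel_measurable lebesgue"
  shows "(\<integral>\<^sup>+z. h z \<partial>lebesgue) = (\<integral>\<^sup>+x. (\<integral>\<^sup>+v. h (x, v) \<partial>lebesgue) \<partial>lebesgue)"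
proof -
  obtain h' where h': "h' \<in> borel_measurable (lborel \<Otimes>\<^sub>M lborel)"
    and ae1: "AE z in lebesgue. h z = h' z"
    and ae: "AE x in lborel. AE v in lborel. h (x, v) = h' (x, v)"
    using lebesgue_pair_borel_representative[OF assms] by blast
  have "(\<integral>\<^sup>+z. h z \<partial>lebesgue) = (\<integral>\<^sup>+z. h' z \<partial>lebesgue)"
    using ae1 by (intro nn_integral_cong_AE) (auto elim: eventually_mono)
  also have "\<dots> = (\<integral>\<^sup>+z. h' z \<partial>(lborel \<Otimes>\<^sub>M lborel))"
    by (simp add: nn_integral_completion lborel_prod)
  also have "\<dots> = (\<integral>\<^sup>+x. (\<integral>\<^sup>+v. h' (x, v) \<partial>lborel) \<partial>lborel)"
    using measurable_compose[OF h' measurable_ennreal]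
    by (intro lborel.nn_integral_fst[symmetric]) (simp add: o_def)
  also have "\<dots> = (\<integral>\<^sup>+x. (\<integral>\<^sup>+v. h (x, v) \<partial>lebesgue) \<partial>lebesgue)"
    using ae
    by (auto simp: nn_integral_completion intro!: nn_integral_cong_AE elim!: eventually_mono)
  finally show ?thesis .
qed

lemma AE_lebesgue_pair_fst:
  assumes "AE x in lborel. P x"
  shows "AE z in (lebesgue :: ('a::euclidean_space \<times> 'b::euclidean_space) measure). P (fst z)"
proof -
  obtain Z where Z: "Z \<in> null_sets lborel" "{x. \<not> P x} \<subseteq> Z"
    using assms by (auto simp: eventually_ae_filter)
  have "Z \<times> UNIV \<in> null_sets (lborel \<Otimes>\<^sub>M (lborel :: 'b measure))"
    using Z(1) by (intro lborel.times_in_null_sets1) auto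
  then have "AE z in lborel. z \<notin> Z \<times> (UNIV :: 'b set)"
    by (simp add: AE_not_in lborel_prod)
  then have "AE z in lebesgue. z \<notin> Z \<times> (UNIV :: 'b set)"
    by (rule AE_completion)
  then show ?thesis
    using Z(2) by (auto elim!: eventually_mono)
qed

lemma borel_measurable_lebesgue_compose_invertible:
  fixes h :: "real ^ 'n \<Rightarrow> real" and A :: "real ^ 'n ^ 'n"
  assumes h: "h \<in> borel_measurable lebesgue" and A: "invertible A"
  shows "(\<lambda>v. h (A *v v)) \<in> borel_measurable lebesgue"
  unfolding borel_measurable_lebesgue_preimage_borel
proof (intro allI impI)
  fix T :: "real set" assume T: "T \<in> sets borel"
  obtain A' where A': "A ** A' = mat 1" "A' ** A = mat 1"
    using A unfolding invertible_def by blast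
  have "{v. h (A *v v) \<in> T} = (\<lambda>u. A' *v u) ` {u. h u \<in> T}"
    using A' by (auto simp: matrix_vector_mul_assoc intro!: image_eqI[where x = "A *v _"])
  moreover have "{u. h u \<in> T} \<in> sets lebesgue"
    using h T unfolding borel_measurable_lebesgue_preimage_borel by auto
  moreover have "(\<lambda>u. A' *v u) ` {u. h u \<in> T} \<in> sets lebesgue"
    by (rule differentiable_image_in_sets_lebesgue)
       (simp_all add: \<open>{u. h u \<in> T} \<in> sets lebesgue\<close> linear_imp_differentiable_on)
  ultimately show "{v. h (A *v v) \<in> T} \<in> sets lebesgue"
    by simp
qed

section \<open>Weak convergence in \<open>L\<^sup>p\<close>\<close>

lemma abs_powr_le_bound_powr:
  fixes t C q :: real
  assumes "\<bar>t\<bar> \<le> C" "1 \<le> q"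
  shows "\<bar>t\<bar> powr q \<le> C powr (q - 1) * \<bar>t\<bar>"
proof (cases "t = 0")
  case False
  then have "\<bar>t\<bar> powr q = \<bar>t\<bar> powr (q - 1) * \<bar>t\<bar>"
    by (simp add: powr_diff)
  also have "\<dots> \<le> C powr (q - 1) * \<bar>t\<bar>"
    using False assms by (intro mult_right_mono powr_mono2) auto
  finally show ?thesis .
qed simp

lemma integrable_abs_powr_if_bounded:
  fixes T :: "'a \<Rightarrow> real"
  assumes T: "integrable M T" and bnd: "AE z in M. \<bar>T z\<bar> \<le> C" and q: "1 \<le> q"
  shows "integrable M (\<lambda>z. \<bar>T z\<bar> powr q)"
proof (rule Bochner_Integration.integrable_bound)
  show "integrable M (\<lambda>z. C powr (q - 1) * \<bar>T z\<bar>)"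
    using T by auto
  show "(\<lambda>z. \<bar>T z\<bar> powr q) \<in> borel_measurable M"
    using borel_measurable_integrable[OF T] by measurable
  show "AE z in M. norm (\<bar>T z\<bar> powr q) \<le> norm (C powr (q - 1) * \<bar>T z\<bar>)"
    using bnd by eventually_elim (use abs_powr_le_bound_powr q in auto)
qed

lemma abs_mult_le_abs_plus_powr:
  fixes x t C p :: real
  assumes t: "\<bar>t\<bar> \<le> C" and p: "1 \<le> p"
  shows "\<bar>x * t\<bar> \<le> \<bar>t\<bar> + C * \<bar>x\<bar> powr p"
proof (cases "\<bar>x\<bar> \<le> 1")
  case True
  then have "\<bar>x * t\<bar> \<le> \<bar>t\<bar>"
    by (simp add: abs_mult mult_left_le_one_le)
  moreover have "0 \<le> C * \<bar>x\<bar> powr p"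
    using t by simp
  ultimately show ?thesis by linarith
next
  case False
  then have "\<bar>x\<bar> powr 1 \<le> \<bar>x\<bar> powr p"
    using p by (intro powr_mono) auto
  then have "\<bar>x\<bar> * \<bar>t\<bar> \<le> \<bar>x\<bar> powr p * C"
    using False t by (intro mult_mono) auto
  then show ?thesis
    by (simp add: abs_mult mult.commute)
qed

lemma integrable_mult_if_Lp_bounded:
  fixes f T :: "phase \<Rightarrow> real"
  assumes f: "in_Lp p f" and p: "1 \<le> p"
    and T: "integrable lebesgue T" and bnd: "AE z in lebesgue. \<bar>T z\<bar> \<le> C"
  shows "integrable lebesgue (\<lambda>z. f z * T z)"
proof (rule Bochner_Integration.integrable_bound)
  show "integrable lebesgue (\<lambda>z. \<bar>T z\<bar> + C * \<bar>f z\<bar> powr p)"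
    using f T unfolding in_Lp_def by auto
  show "(\<lambda>z. f z * T z) \<in> borel_measurable lebesgue"
    using f borel_measurable_integrable[OF T] unfolding in_Lp_def by auto
  show "AE z in lebesgue. norm (f z * T z) \<le> norm (\<bar>T z\<bar> + C * \<bar>f z\<bar> powr p)"
    using bnd by eventually_elim (use abs_mult_le_abs_plus_powr p in force)
qed

lemma weak_Lp_conv_tendsto_integral:
  assumes weak: "weak_Lp_conv p fs f0" and p: "1 < p"
    and T: "integrable lebesgue T" and bnd: "AE z in lebesgue. \<bar>T z\<bar> \<le> C"
  shows "(\<lambda>n. \<integral>z. fs n z * T z \<partial>lebesgue) \<longlonglongrightarrow> (\<integral>z. f0 z * T z \<partial>lebesgue)"
proof -
  have "1 \<le> p / (p - 1)"
    using p by (simp add: field_simps)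
  then have "in_Lp (p / (p - 1)) T"
    unfolding in_Lp_def using integrable_abs_powr_if_bounded[OF T bnd] T by auto
  then show ?thesis
    using weak unfolding weak_Lp_conv_def by blast
qed

lemma weak_Lp_conv_tendsto_integral_diff:
  assumes weak: "weak_Lp_conv p fs f0" and p: "1 < p"
    and T: "integrable lebesgue T" and bnd: "AE z in lebesgue. \<bar>T z\<bar> \<le> C"
  shows "(\<lambda>n. \<integral>z. (fs n z - f0 z) * T z \<partial>lebesgue) \<longlonglongrightarrow> 0"
proof -
  have Lp: "in_Lp p (fs n)" "in_Lp p f0" for n
    using weak unfolding weak_Lp_conv_def by blast+
  have "(\<integral>z. (fs n z - f0 z) * T z \<partial>lebesgue)
      = (\<integral>z. fs n z * T z \<partial>lebesgue) - (\<integral>z. f0 z * T z \<partial>lebesgue)" for n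
    using integrable_mult_if_Lp_bounded[OF Lp(1) _ T bnd]
      integrable_mult_if_Lp_bounded[OF Lp(2) _ T bnd] p
    by (simp add: left_diff_distrib)
  moreover have "(\<lambda>n. (\<integral>z. fs n z * T z \<partial>lebesgue) - (\<integral>z. f0 z * T z \<partial>lebesgue))
      \<longlonglongrightarrow> (\<integral>z. f0 z * T z \<partial>lebesgue) - (\<integral>z. f0 z * T z \<partial>lebesgue)"
    by (intro tendsto_diff tendsto_const weak_Lp_conv_tendsto_integral[OF weak p T bnd])
  ultimately show ?thesis
    by simp
qed

lemma weak_Lp_limit_set_integral_bounds:
  assumes weak: "weak_Lp_conv p fs f0" and p: "1 < p"
    and bounds: "\<And>n z. 0 \<le> fs n z \<and> fs n z \<le> 1"
    and S: "S \<in> sets lebesgue" "bounded S"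
  shows "integrable lebesgue (\<lambda>z. f0 z * indicator S z)"
    and "0 \<le> (\<integral>z. f0 z * indicator S z \<partial>lebesgue)"
    and "(\<integral>z. f0 z * indicator S z \<partial>lebesgue) \<le> measure lebesgue S"
proof -
  have ind: "integrable lebesgue (indicator S :: phase \<Rightarrow> real)"
    by (rule integrable_indicator_bounded[OF S])
  have bnd: "AE z in lebesgue. \<bar>indicator S z :: real\<bar> \<le> 1"
    by simp
  have f0: "in_Lp p f0" and fs: "fs n \<in> borel_measurable lebesgue" for n
    using weak unfolding weak_Lp_conv_def in_Lp_def by blast+
  show "integrable lebesgue (\<lambda>z. f0 z * indicator S z)"
    by (rule integrable_mult_if_Lp_bounded[OF f0 less_imp_le[OF p] ind bnd])
  have lim: "(\<lambda>n. \<integral>z. fs n z * indicator S z \<partial>lebesgue) \<longlonglongrightarrow> (\<integral>z. f0 z * indicator S z \<partial>lebesgue)"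
    by (rule weak_Lp_conv_tendsto_integral[OF weak p ind bnd])
  have "0 \<le> (\<integral>z. fs n z * indicator S z \<partial>lebesgue)" for n
    using bounds by (intro integral_nonneg_AE) auto
  then show "0 \<le> (\<integral>z. f0 z * indicator S z \<partial>lebesgue)"
    using lim by (intro LIMSEQ_le_const) auto
  have "(\<integral>z. fs n z * indicator S z \<partial>lebesgue) \<le> (\<integral>z. indicator S z \<partial>lebesgue)" for n
  proof (rule integral_mono)
    have "(\<lambda>z. fs n z * indicator S z) \<in> borel_measurable lebesgue"
      using fs S(1) by measurable
    then show "integrable lebesgue (\<lambda>z. fs n z * indicator S z)"
      using bounds
      by (intro Bochner_Integration.integrable_bound[OF ind]) (auto simp: indicator_def)
  qed (use bounds ind in \<open>auto split: split_indicator\<close>)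
  then show "(\<integral>z. f0 z * indicator S z \<partial>lebesgue) \<le> measure lebesgue S"
    using lim ind S by (intro LIMSEQ_le_const2) (auto simp: bounded_set_imp_lmeasurable)
qed

lemma weak_Lp_limit_AE_bounds:
  assumes weak: "weak_Lp_conv p fs f0" and p: "1 < p"
    and bounds: "\<And>n z. 0 \<le> fs n z \<and> fs n z \<le> 1"
  shows "AE z in lebesgue. 0 \<le> f0 z \<and> f0 z \<le> 1"
proof -
  note set_bounds = weak_Lp_limit_set_integral_bounds[OF weak p bounds]
  have "AE z in lebesgue. 0 \<le> f0 z"
    using set_bounds(1,2) by (rule AE_nonneg_if_bounded_set_integrals_nonneg)
  moreover have "AE z in lebesgue. 0 \<le> 1 - f0 z"
  proof (rule AE_nonneg_if_bounded_set_integrals_nonneg)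
    fix S :: "phase set" assume S: "S \<in> sets lebesgue" "bounded S"
    have ind: "integrable lebesgue (indicator S :: phase \<Rightarrow> real)"
      by (rule integrable_indicator_bounded[OF S])
    have eq: "(\<lambda>z. (1 - f0 z) * indicator S z) = (\<lambda>z. indicator S z - f0 z * indicator S z)"
      by (simp add: algebra_simps)
    show "integrable lebesgue (\<lambda>z. (1 - f0 z) * indicator S z)"
      unfolding eq using ind set_bounds(1)[OF S] by auto
    show "0 \<le> (\<integral>z. (1 - f0 z) * indicator S z \<partial>lebesgue)"
      unfolding eq using ind set_bounds(1,3)[OF S] S by (simp add: bounded_set_imp_lmeasurable)
  qed
  ultimately show ?thesis
    by eventually_elim simp
qed

lemma weak_Lp_limit_integrable:
  assumes weak: "weak_Lp_conv p fs f0" and p: "1 < p"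
    and fs_nonneg: "\<And>n z. 0 \<le> fs n z" and fs_int: "\<And>n. integrable lebesgue (fs n)"
    and fs_le: "\<And>n. (\<integral>z. fs n z \<partial>lebesgue) \<le> C"
    and f0_nonneg: "AE z in lebesgue. 0 \<le> f0 z"
  shows "integrable lebesgue f0"
proof -
  have f0: "in_Lp p f0"
    using weak unfolding weak_Lp_conv_def by blast
  then have f0_meas: "f0 \<in> borel_measurable lebesgue"
    unfolding in_Lp_def by blast
  have ball_le: "(\<integral>\<^sup>+z\<in>cball 0 (real R). ennreal (f0 z) \<partial>lebesgue) \<le> ennreal C"
    for R :: nat
  proof -
    let ?B = "cball (0::phase) (real R)"
    have ind: "integrable lebesgue (indicator ?B :: phase \<Rightarrow> real)"
      by (rule integrable_indicator_bounded) auto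
    have bnd: "AE z in lebesgue. \<bar>indicator ?B z :: real\<bar> \<le> 1"
      by simp
    have int: "integrable lebesgue (\<lambda>z. f0 z * indicator ?B z)"
      by (rule integrable_mult_if_Lp_bounded[OF f0 less_imp_le[OF p] ind bnd])
    have "(\<integral>z. fs n z * indicator ?B z \<partial>lebesgue) \<le> C" for n
    proof -
      have "(\<integral>z. fs n z * indicator ?B z \<partial>lebesgue) \<le> (\<integral>z. fs n z \<partial>lebesgue)"
        using fs_nonneg fs_int
        by (intro integral_mono integrable_real_mult_indicator) (auto split: split_indicator)
      then show ?thesis
        using fs_le[of n] by linarith
    qed
    then have "(\<integral>z. f0 z * indicator ?B z \<partial>lebesgue) \<le> C"
      by (intro LIMSEQ_le_const2[OF weak_Lp_conv_tendsto_integral[OF weak p ind bnd]]) auto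
    moreover have "(\<integral>\<^sup>+z. ennreal (f0 z * indicator ?B z) \<partial>lebesgue)
        = ennreal (\<integral>z. f0 z * indicator ?B z \<partial>lebesgue)"
      using int f0_nonneg by (intro nn_integral_eq_integral) (auto elim!: eventually_mono)
    moreover have "ennreal (f0 z) * indicator ?B z = ennreal (f0 z * indicator ?B z)" for z
      by (simp split: split_indicator)
    ultimately show ?thesis
      by (simp add: ennreal_leI)
  qed
  have "(\<integral>\<^sup>+z. ennreal (f0 z) \<partial>lebesgue) \<le> ennreal C"
    using f0_meas ball_le by (simp add: nn_integral_lebesgue_SUP_cball SUP_least)
  then show ?thesis
    using f0_meas f0_nonneg
    by (intro integrableI_nonneg) (auto simp: top_unique less_top[symmetric])
qed

section \<open>Banach--Saks: a.e. convergence of dyadic means\<close>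

lemma almost_orthogonal_subseq:
  fixes a :: "nat \<Rightarrow> nat \<Rightarrow> real"
  assumes lim: "\<And>m. (\<lambda>n. a n m) \<longlonglongrightarrow> 0"
  obtains s where "strict_mono s" "\<And>i j. i < j \<Longrightarrow> \<bar>a (s j) (s i)\<bar> \<le> 1 / (real j + 1)"
proof -
  have "\<exists>y. x < y \<and> (\<forall>m\<le>x. \<bar>a y m\<bar> \<le> 1 / (real n + 2))" for x n :: nat
  proof -
    have "eventually (\<lambda>y. \<bar>a y m\<bar> \<le> 1 / (real n + 2)) sequentially" for m
      using tendstoD[OF lim[of m], of "1 / (real n + 2)"] by (auto elim: eventually_mono)
    then have "eventually (\<lambda>y. \<forall>m\<in>{..x}. \<bar>a y m\<bar> \<le> 1 / (real n + 2)) sequentially"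
      by (intro eventually_ball_finite) auto
    then obtain N where "\<And>y. N \<le> y \<Longrightarrow> \<forall>m\<in>{..x}. \<bar>a y m\<bar> \<le> 1 / (real n + 2)"
      unfolding eventually_sequentially by blast
    then show ?thesis
      by (intro exI[of _ "max N (Suc x)"]) auto
  qed
  then obtain s where s: "\<And>n. s n < s (Suc n) \<and> (\<forall>m\<le>s n. \<bar>a (s (Suc n)) m\<bar> \<le> 1 / (real n + 2))"
    using dependent_nat_choice[of "\<lambda>_ _. True"
        "\<lambda>n x y. x < y \<and> (\<forall>m\<le>x. \<bar>a y m\<bar> \<le> 1 / (real n + 2))"] by blast
  then have mono: "strict_mono s"
    by (simp add: strict_mono_Suc_iff)
  moreover have "\<bar>a (s j) (s i)\<bar> \<le> 1 / (real j + 1)" if "i < j" for i j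
  proof -
    obtain j' where j: "j = Suc j'"
      using \<open>i < j\<close> less_imp_Suc_add by blast
    then have "s i \<le> s j'"
      using \<open>i < j\<close> mono by (simp add: strict_mono_less_eq)
    then show ?thesis
      using s[of j'] j by (simp add: add.commute)
  qed
  ultimately show ?thesis
    using that by blast
qed

lemma integrable_mult_if_AE_bounded:
  fixes u v :: "'a \<Rightarrow> real"
  assumes "integrable M u" "integrable M v" "AE z in M. \<bar>u z\<bar> \<le> 1"
  shows "integrable M (\<lambda>z. u z * v z)"
  using assms
  by (intro Bochner_Integration.integrable_bound[OF integrable_abs[OF assms(2)]])
     (auto simp: abs_mult elim!: eventually_mono intro: mult_left_le_one_le)

lemma integral_square_sum_le:
  fixes v :: "nat \<Rightarrow> 'a \<Rightarrow> real"
  assumes int: "\<And>j. integrable M (v j)" and bnd: "\<And>j. AE z in M. \<bar>v j z\<bar> \<le> 1"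
    and diag: "\<And>j. (\<integral>z. (v j z)\<^sup>2 \<partial>M) \<le> B"
    and off_diag: "\<And>i j. i < j \<Longrightarrow> (\<integral>z. v i z * v j z \<partial>M) \<le> 1 / (real j + 1)"
  shows "(\<integral>z. (\<Sum>j<N. v j z)\<^sup>2 \<partial>M) \<le> real N * (B + 2)"
proof (induction N)
  case 0
  then show ?case by simp
next
  case (Suc N)
  have prod: "integrable M (\<lambda>z. v i z * v j z)" for i j
    by (rule integrable_mult_if_AE_bounded[OF int int bnd])
  have sq: "integrable M (\<lambda>z. (\<Sum>j<N. v j z)\<^sup>2)"
    unfolding power2_eq_square sum_product using prod by auto
  have cross_int: "integrable M (\<lambda>z. (\<Sum>j<N. v j z) * v N z)"
    unfolding sum_distrib_right using prod by auto
  have cross: "(\<integral>z. (\<Sum>j<N. v j z) * v N z \<partial>M) \<le> 1"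
  proof -
    have "(\<integral>z. (\<Sum>j<N. v j z) * v N z \<partial>M) = (\<Sum>j<N. \<integral>z. v j z * v N z \<partial>M)"
      unfolding sum_distrib_right using prod by (rule Bochner_Integration.integral_sum)
    also have "\<dots> \<le> (\<Sum>j<N. 1 / (real N + 1))"
      by (intro sum_mono off_diag) simp
    also have "\<dots> \<le> 1"
      by (simp add: field_simps)
    finally show ?thesis .
  qed
  have "(\<integral>z. (\<Sum>j<Suc N. v j z)\<^sup>2 \<partial>M)
      = (\<integral>z. (\<Sum>j<N. v j z)\<^sup>2 + 2 * ((\<Sum>j<N. v j z) * v N z) + (v N z)\<^sup>2 \<partial>M)"
    by (simp add: power2_sum algebra_simps)
  also have "\<dots> = (\<integral>z. (\<Sum>j<N. v j z)\<^sup>2 \<partial>M) + 2 * (\<integral>z. (\<Sum>j<N. v j z) * v N z \<partial>M)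
      + (\<integral>z. (v N z)\<^sup>2 \<partial>M)"
    using sq prod[of N N] cross_int by (simp add: power2_eq_square)
  also have "\<dots> \<le> real N * (B + 2) + 2 + B"
    using Suc.IH cross diag[of N] by linarith
  finally show ?case
    by (simp add: algebra_simps)
qed

lemma AE_tendsto_zero_if_summable_nn_integral:
  fixes a :: "nat \<Rightarrow> 'a \<Rightarrow> real"
  assumes meas: "\<And>m. a m \<in> borel_measurable M" and nonneg: "\<And>m z. 0 \<le> a m z"
    and le: "\<And>m. (\<integral>\<^sup>+z. a m z \<partial>M) \<le> ennreal (b m)"
    and b: "summable b" "\<And>m. 0 \<le> b m"
  shows "AE z in M. (\<lambda>m. a m z) \<longlonglongrightarrow> 0"
proof -
  have "(\<integral>\<^sup>+z. (\<Sum>m. ennreal (a m z)) \<partial>M) = (\<Sum>m. \<integral>\<^sup>+z. a m z \<partial>M)"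
    using meas by (intro nn_integral_suminf) measurable
  also have "\<dots> \<le> (\<Sum>m. ennreal (b m))"
    by (intro suminf_le le) auto
  also have "\<dots> = ennreal (\<Sum>m. b m)"
    using b by (intro suminf_ennreal2) auto
  finally have "(\<integral>\<^sup>+z. (\<Sum>m. ennreal (a m z)) \<partial>M) \<noteq> \<infinity>"
    by (auto simp: top_unique)
  then have "AE z in M. (\<Sum>m. ennreal (a m z)) \<noteq> \<infinity>"
    using meas by (intro nn_integral_PInf_AE) measurable
  then show ?thesis
  proof eventually_elim
    case (elim z)
    then have "summable (\<lambda>m. a m z)"
      using nonneg by (intro summable_suminf_not_top) auto
    then show ?case
      by (rule summable_LIMSEQ_zero)
  qed
qed

definition dyadic_mean :: "(nat \<Rightarrow> 'a \<Rightarrow> real) \<Rightarrow> nat \<Rightarrow> 'a \<Rightarrow> real" where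
  "dyadic_mean u m z = (\<Sum>j<2 ^ m. u j z) / 2 ^ m"

lemma AE_dyadic_mean_tendsto_zero:
  fixes v :: "nat \<Rightarrow> 'a \<Rightarrow> real"
  assumes int: "\<And>j. integrable M (v j)" and bnd: "\<And>j. AE z in M. \<bar>v j z\<bar> \<le> 1"
    and sum_sq: "\<And>N. (\<integral>z. (\<Sum>j<N. v j z)\<^sup>2 \<partial>M) \<le> real N * K"
  shows "AE z in M. (\<lambda>m. dyadic_mean v m z) \<longlonglongrightarrow> 0"
proof -
  have "0 \<le> (\<integral>z. (\<Sum>j<1. v j z)\<^sup>2 \<partial>M)"
    by (rule integral_nonneg_AE) simp
  then have K: "0 \<le> K"
    using sum_sq[of 1] by linarith
  have sq_int: "integrable M (\<lambda>z. (dyadic_mean v m z)\<^sup>2)" for m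
  proof -
    have "integrable M (\<lambda>z. v i z * v j z)" for i j
      by (rule integrable_mult_if_AE_bounded[OF int int bnd])
    then show ?thesis
      by (simp add: dyadic_mean_def power_divide power2_eq_square sum_product)
  qed
  have "AE z in M. (\<lambda>m. (dyadic_mean v m z)\<^sup>2) \<longlonglongrightarrow> 0"
  proof (rule AE_tendsto_zero_if_summable_nn_integral)
    show "(\<lambda>z. (dyadic_mean v m z)\<^sup>2) \<in> borel_measurable M" for m
      using sq_int by (rule borel_measurable_integrable)
    show "(\<integral>\<^sup>+z. (dyadic_mean v m z)\<^sup>2 \<partial>M) \<le> ennreal (K * (1 / 2) ^ m)" for m
    proof -
      have "(\<integral>z. (dyadic_mean v m z)\<^sup>2 \<partial>M) = (\<integral>z. (\<Sum>j<2 ^ m. v j z)\<^sup>2 \<partial>M) / 4 ^ m"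
        by (simp add: dyadic_mean_def power_divide power2_eq_square power_mult_distrib[symmetric])
      also have "\<dots> \<le> real (2 ^ m) * K / 4 ^ m"
        by (intro divide_right_mono sum_sq) simp
      also have "\<dots> = K * (1 / 2) ^ m"
        by (simp add: field_simps power_mult_distrib[symmetric])
      finally show ?thesis
        using sq_int by (simp add: nn_integral_eq_integral ennreal_leI)
    qed
    show "summable (\<lambda>m. K * (1 / 2 :: real) ^ m)"
      by (intro summable_mult summable_geometric) simp
    show "0 \<le> K * (1 / 2 :: real) ^ m" for m
      using K by simp
  qed simp
  then show ?thesis
  proof eventually_elim
    case (elim z)
    then have "(\<lambda>m. sqrt ((dyadic_mean v m z)\<^sup>2)) \<longlonglongrightarrow> sqrt 0"
      by (rule tendsto_real_sqrt)
    then show ?case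
      by (simp add: tendsto_rabs_zero_iff)
  qed
qed

lemma banach_saks_dyadic_mean:
  fixes u :: "nat \<Rightarrow> 'a \<Rightarrow> real"
  assumes int: "\<And>n. integrable M (u n)" and bnd: "\<And>n. AE z in M. \<bar>u n z\<bar> \<le> 1"
    and diag: "\<And>n. (\<integral>z. (u n z)\<^sup>2 \<partial>M) \<le> B"
    and orth: "\<And>m. (\<lambda>n. \<integral>z. u n z * u m z \<partial>M) \<longlonglongrightarrow> 0"
  obtains s where "strict_mono s" "AE z in M. (\<lambda>m. dyadic_mean (u \<circ> s) m z) \<longlonglongrightarrow> 0"
proof -
  obtain s where s: "strict_mono s"
    and small: "\<And>i j. i < j \<Longrightarrow> \<bar>\<integral>z. u (s j) z * u (s i) z \<partial>M\<bar> \<le> 1 / (real j + 1)"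
    using almost_orthogonal_subseq[of "\<lambda>n m. \<integral>z. u n z * u m z \<partial>M", OF orth] by blast
  have "AE z in M. (\<lambda>m. dyadic_mean (u \<circ> s) m z) \<longlonglongrightarrow> 0"
  proof (rule AE_dyadic_mean_tendsto_zero)
    show "(\<integral>z. (\<Sum>j<N. (u \<circ> s) j z)\<^sup>2 \<partial>M) \<le> real N * (B + 2)" for N
    proof (rule integral_square_sum_le)
      fix i j :: nat assume "i < j"
      then show "(\<integral>z. (u \<circ> s) i z * (u \<circ> s) j z \<partial>M) \<le> 1 / (real j + 1)"
        using small[of i j] by (simp add: mult.commute)
    qed (use int bnd diag in auto)
  qed (use int bnd in auto)
  then show ?thesis
    using that s by blast
qed

lemma square_diff_le_add:
  fixes a b :: real
  assumes "0 \<le> a" "a \<le> 1" "0 \<le> b" "b \<le> 1"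
  shows "(a - b)\<^sup>2 \<le> a + b"
proof -
  have "\<bar>a - b\<bar> * \<bar>a - b\<bar> \<le> \<bar>a - b\<bar>"
    using assms by (intro mult_left_le_one_le) auto
  then show ?thesis
    using assms by (simp add: power2_eq_square)
qed

lemma weak_Lp_conv_dyadic_mean:
  assumes weak: "weak_Lp_conv p fs f0" and p: "1 < p"
    and bounds: "\<And>n z. 0 \<le> fs n z \<and> fs n z \<le> 1"
    and int: "\<And>n. integrable lebesgue (fs n)" and le: "\<And>n. (\<integral>z. fs n z \<partial>lebesgue) \<le> C"
  obtains s where "strict_mono s" "AE z in lebesgue. (\<lambda>m. dyadic_mean (fs \<circ> s) m z) \<longlonglongrightarrow> f0 z"
proof -
  have f0_bounds: "AE z in lebesgue. 0 \<le> f0 z \<and> f0 z \<le> 1"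
    by (rule weak_Lp_limit_AE_bounds[OF weak p bounds])
  have f0: "integrable lebesgue f0"
    using f0_bounds bounds int le
    by (intro weak_Lp_limit_integrable[OF weak p]) (auto elim: eventually_mono)
  define u where "u n z = fs n z - f0 z" for n z
  have u_int: "integrable lebesgue (u n)" for n
    unfolding u_def using int f0 by auto
  have u_bnd: "AE z in lebesgue. \<bar>u n z\<bar> \<le> 1"
    and u_sq: "AE z in lebesgue. (u n z)\<^sup>2 \<le> fs n z + f0 z"
    for n
  proof -
    have "\<bar>u n z\<bar> \<le> 1 \<and> (u n z)\<^sup>2 \<le> fs n z + f0 z" if "0 \<le> f0 z \<and> f0 z \<le> 1" for z
      using that bounds[of n z] square_diff_le_add[of "fs n z" "f0 z"] unfolding u_def by auto
    then show "AE z in lebesgue. \<bar>u n z\<bar> \<le> 1" "AE z in lebesgue. (u n z)\<^sup>2 \<le> fs n z + f0 z"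
      using f0_bounds by (auto elim: eventually_mono)
  qed
  obtain s where s: "strict_mono s" and lim: "AE z in lebesgue. (\<lambda>m. dyadic_mean (u \<circ> s) m z) \<longlonglongrightarrow> 0"
  proof (rule banach_saks_dyadic_mean[OF u_int u_bnd])
    show "(\<integral>z. (u n z)\<^sup>2 \<partial>lebesgue) \<le> C + (\<integral>z. f0 z \<partial>lebesgue)" for n
    proof -
      have "(\<integral>z. (u n z)\<^sup>2 \<partial>lebesgue) \<le> (\<integral>z. fs n z + f0 z \<partial>lebesgue)"
        using u_sq int f0 integrable_mult_if_AE_bounded[OF u_int u_int u_bnd]
        by (intro integral_mono_AE) (auto simp: power2_eq_square)
      then show ?thesis
        using le[of n] int f0 by simp
    qed
    show "(\<lambda>n. \<integral>z. u n z * u m z \<partial>lebesgue) \<longlonglongrightarrow> 0" for m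
      using weak_Lp_conv_tendsto_integral_diff[OF weak p u_int[of m] u_bnd[of m]]
      by (simp add: u_def)
  qed
  have "dyadic_mean (u \<circ> s) m z = dyadic_mean (fs \<circ> s) m z - f0 z" for m z
    by (simp add: dyadic_mean_def u_def sum_subtractf diff_divide_distrib)
  then have "AE z in lebesgue. (\<lambda>m. dyadic_mean (fs \<circ> s) m z) \<longlonglongrightarrow> f0 z"
    using lim by (auto elim!: eventually_mono simp: LIM_zero_iff)
  then show ?thesis
    using that s by blast
qed

section \<open>Fatou's lemma for limits of dyadic means\<close>

definition limit_or_zero :: "(nat \<Rightarrow> real) \<Rightarrow> real" where
  "limit_or_zero X = (if convergent X then lim X else 0)"

lemma limit_or_zero_eq: "X \<longlonglongrightarrow> L \<Longrightarrow> limit_or_zero X = L"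
  by (auto simp: limit_or_zero_def convergent_def limI)

lemma limit_or_zero_bounds:
  assumes "\<And>m. a \<le> X m \<and> X m \<le> b" "a \<le> 0" "0 \<le> b"
  shows "a \<le> limit_or_zero X \<and> limit_or_zero X \<le> b"
proof (cases "convergent X")
  case True
  then have "X \<longlonglongrightarrow> lim X"
    by (simp add: convergent_LIMSEQ_iff)
  then show ?thesis
    using True assms(1) by (auto simp: limit_or_zero_def intro: LIMSEQ_le_const LIMSEQ_le_const2)
qed (use assms in \<open>simp add: limit_or_zero_def\<close>)

lemma borel_measurable_limit_or_zero:
  fixes f :: "nat \<Rightarrow> 'a \<Rightarrow> real"
  assumes [measurable]: "\<And>m. f m \<in> borel_measurable M"
  shows "(\<lambda>z. limit_or_zero (\<lambda>m. f m z)) \<in> borel_measurable M"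
  unfolding limit_or_zero_def Cauchy_convergent_iff[symmetric] by measurable

lemma ennreal_limit_or_zero_le_liminf:
  assumes "0 \<le> w"
  shows "ennreal (w * limit_or_zero X) \<le> liminf (\<lambda>m. ennreal (w * X m))"
proof (cases "convergent X")
  case True
  then have "(\<lambda>m. ennreal (w * X m)) \<longlonglongrightarrow> ennreal (w * limit_or_zero X)"
    by (intro tendsto_ennrealI tendsto_mult tendsto_const)
       (simp add: limit_or_zero_def convergent_LIMSEQ_iff)
  then show ?thesis
    by (simp add: lim_imp_Liminf)
qed (simp add: limit_or_zero_def)

lemma dyadic_mean_bounds:
  assumes "\<And>j. 0 \<le> u j z \<and> u j z \<le> 1"
  shows "0 \<le> dyadic_mean u m z \<and> dyadic_mean u m z \<le> 1"
proof -
  have "(\<Sum>j<2 ^ m. u j z) \<le> (\<Sum>j<(2::nat) ^ m. 1)"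
    using assms by (intro sum_mono) auto
  then show ?thesis
    using assms by (auto simp: dyadic_mean_def intro!: divide_nonneg_nonneg sum_nonneg)
qed

lemma borel_measurable_dyadic_mean:
  "(\<And>j. u j \<in> borel_measurable M) \<Longrightarrow> dyadic_mean u m \<in> borel_measurable M"
  unfolding dyadic_mean_def[abs_def]
  by (intro borel_measurable_divide borel_measurable_sum borel_measurable_const)

lemma nn_integral_dyadic_mean_le:
  fixes u :: "nat \<Rightarrow> 'a \<Rightarrow> real"
  assumes meas: "\<And>j. u j \<in> borel_measurable M" "W \<in> borel_measurable M"
    and nonneg: "\<And>j z. 0 \<le> u j z" "\<And>z. 0 \<le> W z"
    and le: "\<And>j. (\<integral>\<^sup>+z. ennreal (W z * u j z) \<partial>M) \<le> B"
  shows "(\<integral>\<^sup>+z. ennreal (W z * dyadic_mean u m z) \<partial>M) \<le> B"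
proof -
  let ?c = "ennreal (1 / 2 ^ m)"
  have eq: "ennreal (W z * dyadic_mean u m z) = ?c * (\<Sum>j<2 ^ m. ennreal (W z * u j z))" for z
    using nonneg by (simp add: dyadic_mean_def sum_distrib_left sum_divide_distrib
        ennreal_mult'[symmetric])
  have "(\<integral>\<^sup>+z. ennreal (W z * dyadic_mean u m z) \<partial>M)
      = ?c * (\<Sum>j<2 ^ m. \<integral>\<^sup>+z. ennreal (W z * u j z) \<partial>M)"
    unfolding eq using meas by (simp add: nn_integral_cmult nn_integral_sum)
  also have "\<dots> \<le> ?c * (\<Sum>j<(2::nat) ^ m. B)"
    by (intro mult_left_mono sum_mono le) auto
  also have "\<dots> = (?c * of_nat (2 ^ m)) * B"
    by (simp add: mult.assoc)
  also have "?c * of_nat (2 ^ m) = 1"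
    by (simp add: ennreal_of_nat_eq_real_of_nat ennreal_mult'[symmetric])
  finally show ?thesis
    by simp
qed

lemma nn_integral_limit_or_zero_dyadic_mean_le:
  fixes u :: "nat \<Rightarrow> 'a \<Rightarrow> real"
  assumes meas: "\<And>j. u j \<in> borel_measurable M" "W \<in> borel_measurable M"
    and nonneg: "\<And>j z. 0 \<le> u j z" "\<And>z. 0 \<le> W z"
    and le: "\<And>j. (\<integral>\<^sup>+z. ennreal (W z * u j z) \<partial>M) \<le> B"
  shows "(\<integral>\<^sup>+z. ennreal (W z * limit_or_zero (\<lambda>m. dyadic_mean u m z)) \<partial>M) \<le> B"
proof -
  have "(\<integral>\<^sup>+z. ennreal (W z * limit_or_zero (\<lambda>m. dyadic_mean u m z)) \<partial>M)
      \<le> (\<integral>\<^sup>+z. liminf (\<lambda>m. ennreal (W z * dyadic_mean u m z)) \<partial>M)"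
    using nonneg by (intro nn_integral_mono ennreal_limit_or_zero_le_liminf)
  also have "\<dots> \<le> liminf (\<lambda>m. \<integral>\<^sup>+z. ennreal (W z * dyadic_mean u m z) \<partial>M)"
    using meas by (intro nn_integral_liminf measurable_compose[OF _ measurable_ennreal]
        borel_measurable_times borel_measurable_dyadic_mean)
  also have "\<dots> \<le> B"
    using nn_integral_dyadic_mean_le[OF meas nonneg le]
    by (auto simp: liminf_SUP_INF intro!: SUP_least INF_lower2)
  finally show ?thesis .
qed

section \<open>A spherically symmetric representative of the weak limit\<close>

lemma SO3_transpose: "A \<in> SO3 \<Longrightarrow> transpose A \<in> SO3"
  by (simp add: SO3_def)

lemma SO3_mult_transpose:
  assumes "A \<in> SO3"
  shows "A *v (transpose A *v v) = v"
proof -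
  have "A ** transpose A = mat 1"
    using assms by (simp add: SO3_def orthogonal_matrix_def)
  then show ?thesis
    by (simp only: matrix_vector_mul_assoc matrix_vector_mul_lid)
qed

lemma spherically_symmetric_rotate_fst:
  assumes "spherically_symmetric f" "A \<in> SO3"
  shows "f (A *v x, v) = f (x, transpose A *v v)"
proof -
  have "f (A *v x, v) = f (A *v x, A *v (transpose A *v v))"
    by (simp only: SO3_mult_transpose[OF assms(2)])
  also have "\<dots> = f (x, transpose A *v v)"
    using assms unfolding spherically_symmetric_def by blast
  finally show ?thesis .
qed

lemma sections_measurable_rotate:
  assumes sym: "\<And>n. spherically_symmetric (u n)" and A: "A \<in> SO3"
    and x: "\<forall>n. (\<lambda>v. u n (x, v)) \<in> borel_measurable lebesgue"
  shows "\<forall>n. (\<lambda>v. u n (A *v x, v)) \<in> borel_measurable lebesgue"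
proof
  fix n
  have "invertible (transpose A)"
    using A unfolding SO3_def orthogonal_matrix_def invertible_def by auto
  then have "(\<lambda>v. u n (x, transpose A *v v)) \<in> borel_measurable lebesgue"
    using x by (intro borel_measurable_lebesgue_compose_invertible[where h = "\<lambda>v. u n (x, v)"]) auto
  then show "(\<lambda>v. u n (A *v x, v)) \<in> borel_measurable lebesgue"
    by (simp add: spherically_symmetric_rotate_fst[OF sym A])
qed

(* Forcing the value 0 on the fibres over x where some u n (x, -) is not measurable changes g
   only on a rotation invariant null set of x, and makes rho g x a Fatou limit on every fibre. *)
definition dyadic_limit :: "(nat \<Rightarrow> phase \<Rightarrow> real) \<Rightarrow> phase \<Rightarrow> real" where
  "dyadic_limit u z =
     (if \<forall>n. (\<lambda>v. u n (fst z, v)) \<in> borel_measurable lebesgue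
      then limit_or_zero (\<lambda>m. dyadic_mean u m z) else 0)"

lemma AE_dyadic_limit_eq:
  assumes "\<And>n. u n \<in> borel_measurable lebesgue"
  shows "AE z in lebesgue. dyadic_limit u z = limit_or_zero (\<lambda>m. dyadic_mean u m z)"
proof -
  have "AE x in lborel. \<forall>n. (\<lambda>v. u n (x, v)) \<in> borel_measurable lebesgue"
    unfolding AE_all_countable using AE_section_measurable assms by blast
  then have "AE z in lebesgue. \<forall>n. (\<lambda>v. u n (fst z, v)) \<in> borel_measurable lebesgue"
    by (rule AE_lebesgue_pair_fst)
  then show ?thesis
    by eventually_elim (simp add: dyadic_limit_def)
qed

lemma borel_measurable_dyadic_limit:
  assumes "\<And>n. u n \<in> borel_measurable lebesgue"
  shows "dyadic_limit u \<in> borel_measurable lebesgue"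
proof (rule borel_measurable_AE)
  show "(\<lambda>z. limit_or_zero (\<lambda>m. dyadic_mean u m z)) \<in> borel_measurable lebesgue"
    by (intro borel_measurable_limit_or_zero borel_measurable_dyadic_mean assms)
  show "AE z in lebesgue. limit_or_zero (\<lambda>m. dyadic_mean u m z) = dyadic_limit u z"
    using AE_dyadic_limit_eq[of u, OF assms] by (auto elim: eventually_mono)
qed

lemma spherically_symmetric_dyadic_limit:
  assumes sym: "\<And>n. spherically_symmetric (u n)"
  shows "spherically_symmetric (dyadic_limit u)"
  unfolding spherically_symmetric_def
proof (intro ballI allI)
  fix A x v assume A: "A \<in> SO3"
  have "transpose A *v (A *v x) = x"
    using SO3_mult_transpose[OF SO3_transpose[OF A], of x] by simp
  then have "(\<forall>n. (\<lambda>v. u n (A *v x, v)) \<in> borel_measurable lebesgue)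
      \<longleftrightarrow> (\<forall>n. (\<lambda>v. u n (x, v)) \<in> borel_measurable lebesgue)"
    using sections_measurable_rotate[of u, OF sym A, where x = x]
      sections_measurable_rotate[of u, OF sym SO3_transpose[OF A], where x = "A *v x"]
    by (intro iffI) simp_all
  moreover have "dyadic_mean u m (A *v x, A *v v) = dyadic_mean u m (x, v)" for m
    using sym A by (simp add: dyadic_mean_def spherically_symmetric_def)
  ultimately show "dyadic_limit u (A *v x, A *v v) = dyadic_limit u (x, v)"
    by (simp add: dyadic_limit_def)
qed

lemma dyadic_limit_bounds:
  assumes "\<And>n z. 0 \<le> u n z \<and> u n z \<le> 1"
  shows "0 \<le> dyadic_limit u z \<and> dyadic_limit u z \<le> 1"
proof -
  have "0 \<le> dyadic_mean u m z \<and> dyadic_mean u m z \<le> 1" for m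
    using assms by (rule dyadic_mean_bounds)
  then show ?thesis
    using limit_or_zero_bounds[of 0 "\<lambda>m. dyadic_mean u m z" 1] by (simp add: dyadic_limit_def)
qed

lemma nn_integral_dyadic_limit_le:
  assumes meas: "\<And>n. u n \<in> borel_measurable lebesgue" "W \<in> borel_measurable lebesgue"
    and nonneg: "\<And>n z. 0 \<le> u n z" "\<And>z. 0 \<le> W z"
    and le: "\<And>n. (\<integral>\<^sup>+z. ennreal (W z * u n z) \<partial>lebesgue) \<le> B"
  shows "(\<integral>\<^sup>+z. ennreal (W z * dyadic_limit u z) \<partial>lebesgue) \<le> B"
proof -
  have "(\<integral>\<^sup>+z. ennreal (W z * dyadic_limit u z) \<partial>lebesgue)
      = (\<integral>\<^sup>+z. ennreal (W z * limit_or_zero (\<lambda>m. dyadic_mean u m z)) \<partial>lebesgue)"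
    using AE_dyadic_limit_eq[of u, OF meas(1)]
    by (intro nn_integral_cong_AE) (auto elim: eventually_mono)
  also have "\<dots> \<le> B"
    by (rule nn_integral_limit_or_zero_dyadic_mean_le[OF meas nonneg le])
  finally show ?thesis .
qed

lemma rho_dyadic_limit_le:
  assumes nonneg: "\<And>n z. 0 \<le> u n z" and le: "\<And>n x. rho (u n) x \<le> B"
  shows "rho (dyadic_limit u) x \<le> B"
proof (cases "\<forall>n. (\<lambda>v. u n (x, v)) \<in> borel_measurable lebesgue")
  case True
  have "rho (dyadic_limit u) x
      = (\<integral>\<^sup>+v. ennreal (sqrt (1 + (norm v)\<^sup>2)
          * limit_or_zero (\<lambda>m. dyadic_mean (\<lambda>n v. u n (x, v)) m v)) \<partial>lebesgue)"
    using True by (simp add: rho_def dyadic_limit_def dyadic_mean_def)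
  also have "\<dots> \<le> B"
  proof (rule nn_integral_limit_or_zero_dyadic_mean_le)
    show "(\<lambda>v::real^3. sqrt (1 + (norm v)\<^sup>2)) \<in> borel_measurable lebesgue"
      by (intro measurable_completion) measurable
    show "(\<lambda>v. u n (x, v)) \<in> borel_measurable lebesgue" for n
      using True by blast
    show "0 \<le> u n (x, v)" "0 \<le> sqrt (1 + (norm v)\<^sup>2)" for n v
      using nonneg by simp_all
    show "(\<integral>\<^sup>+v. ennreal (sqrt (1 + (norm v)\<^sup>2) * u n (x, v)) \<partial>lebesgue) \<le> B" for n
      using le[of n x] by (simp add: rho_def)
  qed
  finally show ?thesis .
next
  case False
  then have "dyadic_limit u (x, v) = 0" for v
    by (simp only: dyadic_limit_def fst_conv if_not_P if_False)
  then show ?thesis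
    by (simp add: rho_def)
qed

definition total_mass :: "(phase \<Rightarrow> real) \<Rightarrow> ennreal" where
  "total_mass f = (\<integral>\<^sup>+z. ennreal (sqrt (1 + (norm (snd z))\<^sup>2) * f z) \<partial>lebesgue)"

definition tail_mass :: "(phase \<Rightarrow> real) \<Rightarrow> real \<Rightarrow> ennreal" where
  "tail_mass f P = (\<integral>\<^sup>+z. ennreal (indicator {z. norm (snd z) \<ge> P + 1} z
      * sqrt (1 + (norm (snd z))\<^sup>2) * f z) \<partial>lebesgue)"

lemma integrable_if_total_mass_le:
  assumes f: "f \<in> borel_measurable lebesgue" "\<And>z. 0 \<le> f z"
    and total: "total_mass f \<le> ennreal M" and M: "0 \<le> M"
  shows "integrable lebesgue f" "(\<integral>z. f z \<partial>lebesgue) \<le> M"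
proof -
  have "f z \<le> sqrt (1 + (norm (snd z))\<^sup>2) * f z" for z
    using mult_right_mono[of 1 "sqrt (1 + (norm (snd z))\<^sup>2)" "f z"] f(2) by simp
  then have "(\<integral>\<^sup>+z. f z \<partial>lebesgue) \<le> total_mass f"
    unfolding total_mass_def by (intro nn_integral_mono ennreal_leI)
  then have le: "(\<integral>\<^sup>+z. f z \<partial>lebesgue) \<le> ennreal M"
    using total by (rule order_trans)
  then show "integrable lebesgue f"
    using f by (intro integrableI_nonneg) (auto simp: top_unique less_top[symmetric])
  show "(\<integral>z. f z \<partial>lebesgue) \<le> M"
    using le f M by (simp add: integral_eq_nn_integral enn2real_leI)
qed

lemma weak_limit_symmetric_representative:
  assumes weak: "weak_Lp_conv p fs f0" and p: "1 < p"
    and bounds: "\<And>n z. 0 \<le> fs n z \<and> fs n z \<le> 1"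
    and meas: "\<And>n. fs n \<in> borel_measurable lebesgue" and sym: "\<And>n. spherically_symmetric (fs n)"
    and total: "\<And>n. total_mass (fs n) \<le> ennreal M" and M: "0 \<le> M"
    and rho: "\<And>n x. rho (fs n) x \<le> ennreal \<sigma>"
    and tail: "\<And>n P. P1 \<le> P \<Longrightarrow> tail_mass (fs n) P \<le> ennreal (\<tau> P)"
  obtains g where "g \<in> borel_measurable lebesgue" "AE z in lebesgue. g z = f0 z"
    "\<And>z. 0 \<le> g z \<and> g z \<le> 1" "spherically_symmetric g" "total_mass g \<le> ennreal M"
    "\<And>x. rho g x \<le> ennreal \<sigma>" "\<And>P. P1 \<le> P \<Longrightarrow> tail_mass g P \<le> ennreal (\<tau> P)"
proof -
  have "integrable lebesgue (fs n)" "(\<integral>z. fs n z \<partial>lebesgue) \<le> M" for n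
    using integrable_if_total_mass_le[OF meas _ total M] bounds by auto
  then obtain s where means: "AE z in lebesgue. (\<lambda>m. dyadic_mean (fs \<circ> s) m z) \<longlonglongrightarrow> f0 z"
    using weak_Lp_conv_dyadic_mean[OF weak p bounds] by metis
  let ?u = "fs \<circ> s"
  have u: "\<And>n. ?u n \<in> borel_measurable lebesgue" "\<And>n z. 0 \<le> ?u n z \<and> ?u n z \<le> 1"
    using meas bounds by simp_all
  have "AE z in lebesgue. dyadic_limit ?u z = f0 z"
    using AE_dyadic_limit_eq[of ?u, OF u(1)] means by eventually_elim (simp add: limit_or_zero_eq)
  moreover have "total_mass (dyadic_limit ?u) \<le> ennreal M"
    unfolding total_mass_def using u total
    by (intro nn_integral_dyadic_limit_le) (auto simp: total_mass_def)
  moreover have "tail_mass (dyadic_limit ?u) P \<le> ennreal (\<tau> P)" if "P1 \<le> P" for P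
    unfolding tail_mass_def using u tail[OF that]
    by (intro nn_integral_dyadic_limit_le) (auto simp: tail_mass_def)
  moreover have "spherically_symmetric (dyadic_limit ?u)"
    using sym by (intro spherically_symmetric_dyadic_limit) simp
  moreover have "rho (dyadic_limit ?u) x \<le> ennreal \<sigma>" for x
    using u rho by (intro rho_dyadic_limit_le) auto
  ultimately show ?thesis
    using that borel_measurable_dyadic_limit[of ?u, OF u(1)] dyadic_limit_bounds[of ?u, OF u(2)]
    by blast
qed

section \<open>Convergence of the mass functions\<close>

definition mass_test :: "real \<Rightarrow> real \<Rightarrow> phase \<Rightarrow> real" where
  "mass_test r P z =
     indicator {z. norm (fst z) \<le> r \<and> norm (snd z) < P + 1} z * sqrt (1 + (norm (snd z))\<^sup>2)"

lemma mass_test_bounded: "\<bar>mass_test r P z\<bar> \<le> sqrt (1 + (P + 1)\<^sup>2)"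
proof (cases "norm (snd z) < P + 1")
  case True
  then have "(norm (snd z))\<^sup>2 \<le> (P + 1)\<^sup>2"
    by (intro power_mono) auto
  then show ?thesis
    by (auto simp: mass_test_def split: split_indicator)
qed (auto simp: mass_test_def)

lemma integrable_mass_test: "integrable lebesgue (mass_test r P)"
proof (rule Bochner_Integration.integrable_bound)
  let ?C = "sqrt (1 + (P + 1)\<^sup>2)"
  show "integrable lebesgue (\<lambda>z. ?C * indicator (cball (0::phase) (r + (P + 1))) z)"
    using integrable_indicator_bounded[of "cball (0::phase) (r + (P + 1))"] by auto
  show "mass_test r P \<in> borel_measurable lebesgue"
    unfolding mass_test_def[abs_def] by measurable
  have "norm z \<le> r + (P + 1)" if "norm (fst z) \<le> r" "norm (snd z) < P + 1" for z :: phase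
    using norm_Pair_le[of "fst z" "snd z"] that by simp
  then show "AE z in lebesgue.
      norm (mass_test r P z) \<le> norm (?C * indicator (cball 0 (r + (P + 1))) z)"
    using mass_test_bounded[of r P]
    by (intro AE_I2) (auto simp: mass_test_def split: split_indicator)
qed

lemma mass_fn_eq_integral:
  assumes f: "f \<in> borel_measurable lebesgue" "\<And>z. 0 \<le> f z" and total: "total_mass f < \<infinity>"
  shows "integrable lebesgue
      (\<lambda>z. indicator {z. norm (fst z) \<le> r} z * sqrt (1 + (norm (snd z))\<^sup>2) * f z)"
    and "mass_fn f r =
      (\<integral>z. indicator {z. norm (fst z) \<le> r} z * sqrt (1 + (norm (snd z))\<^sup>2) * f z \<partial>lebesgue)"
proof -
  let ?h = "\<lambda>z. indicator {z. norm (fst z) \<le> r} z * sqrt (1 + (norm (snd z))\<^sup>2) * f z"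
  have meas: "?h \<in> borel_measurable lebesgue"
    using f by measurable
  have "(\<integral>\<^sup>+z. ?h z \<partial>lebesgue) \<le> total_mass f"
    unfolding total_mass_def using f
    by (intro nn_integral_mono ennreal_leI) (auto split: split_indicator)
  then show int: "integrable lebesgue ?h"
    using meas f total by (intro integrableI_nonneg) auto
  show "mass_fn f r = (\<integral>z. ?h z \<partial>lebesgue)"
    unfolding mass_fn_def using meas f by (subst integral_eq_nn_integral) auto
qed

lemma mass_fn_approx:
  assumes f: "f \<in> borel_measurable lebesgue" "\<And>z. 0 \<le> f z" and total: "total_mass f < \<infinity>"
    and tail: "tail_mass f P \<le> ennreal t" and t: "0 \<le> t"
  shows "\<bar>mass_fn f r - (\<integral>z. f z * mass_test r P z \<partial>lebesgue)\<bar> \<le> t"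
proof -
  let ?h = "\<lambda>z. indicator {z. norm (fst z) \<le> r} z * sqrt (1 + (norm (snd z))\<^sup>2) * f z"
  let ?R = "\<lambda>z. indicator {z. norm (fst z) \<le> r \<and> norm (snd z) \<ge> P + 1} z
    * sqrt (1 + (norm (snd z))\<^sup>2) * f z"
  have h: "integrable lebesgue ?h" and eq: "mass_fn f r = (\<integral>z. ?h z \<partial>lebesgue)"
    using mass_fn_eq_integral[OF f total] by auto
  have meas_R: "?R \<in> borel_measurable lebesgue"
    and meas_T: "(\<lambda>z. f z * mass_test r P z) \<in> borel_measurable lebesgue"
    using f unfolding mass_test_def by measurable
  have R: "integrable lebesgue ?R"
    using f by (intro Bochner_Integration.integrable_bound[OF h meas_R] AE_I2)
      (auto simp: abs_mult split: split_indicator)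
  have T: "integrable lebesgue (\<lambda>z. f z * mass_test r P z)"
    using f by (intro Bochner_Integration.integrable_bound[OF h meas_T] AE_I2)
      (auto simp: mass_test_def abs_mult split: split_indicator)
  have "?h z = f z * mass_test r P z + ?R z" for z
    by (auto simp: mass_test_def split: split_indicator)
  then have "mass_fn f r - (\<integral>z. f z * mass_test r P z \<partial>lebesgue) = (\<integral>z. ?R z \<partial>lebesgue)"
    unfolding eq using T R by simp
  moreover have "(\<integral>z. ?R z \<partial>lebesgue) \<le> t"
  proof -
    have "ennreal (\<integral>z. ?R z \<partial>lebesgue) = (\<integral>\<^sup>+z. ?R z \<partial>lebesgue)"
      using R f by (intro nn_integral_eq_integral[symmetric]) auto
    also have "\<dots> \<le> tail_mass f P"
      unfolding tail_mass_def using f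
      by (intro nn_integral_mono ennreal_leI) (auto split: split_indicator)
    finally show ?thesis
      using tail t by (simp add: ennreal_le_iff[symmetric] del: ennreal_le_iff) 
  qed
  moreover have "0 \<le> (\<integral>z. ?R z \<partial>lebesgue)"
    using f by (intro integral_nonneg_AE) auto
  ultimately show ?thesis
    by simp
qed

lemma tendsto_if_approximations:
  fixes x :: "nat \<Rightarrow> real"
  assumes "\<And>\<epsilon>. 0 < \<epsilon> \<Longrightarrow> \<exists>a b. a \<longlonglongrightarrow> b \<and> (\<forall>n. \<bar>x n - a n\<bar> \<le> \<epsilon>) \<and> \<bar>y - b\<bar> \<le> \<epsilon>"
  shows "x \<longlonglongrightarrow> y"
proof (rule LIMSEQ_I)
  fix e :: real assume "0 < e"
  then obtain a b where a: "a \<longlonglongrightarrow> b" and xa: "\<And>n. \<bar>x n - a n\<bar> \<le> e / 3" and yb: "\<bar>y - b\<bar> \<le> e / 3"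
    using assms[of "e / 3"] by auto
  obtain N where N: "\<And>n. N \<le> n \<Longrightarrow> \<bar>a n - b\<bar> < e / 3"
    using LIMSEQ_D[OF a, of "e / 3"] \<open>0 < e\<close> by auto
  have "\<bar>x n - y\<bar> < e" if "N \<le> n" for n
    using xa[of n] yb N[OF that] by linarith
  then show "\<exists>N. \<forall>n\<ge>N. norm (x n - y) < e"
    by auto
qed

lemma mass_fn_tendsto:
  assumes weak: "weak_Lp_conv p fs f0" and p: "1 < p"
    and fs: "\<And>n. fs n \<in> borel_measurable lebesgue" "\<And>n z. 0 \<le> fs n z" "\<And>n. total_mass (fs n) < \<infinity>"
    and g: "g \<in> borel_measurable lebesgue" "\<And>z. 0 \<le> g z" "total_mass g < \<infinity>"
    and g_f0: "AE z in lebesgue. g z = f0 z"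
    and tail: "\<And>n P. P \<ge> P1 \<Longrightarrow> tail_mass (fs n) P \<le> ennreal (\<tau> P)"
      "\<And>P. P \<ge> P1 \<Longrightarrow> tail_mass g P \<le> ennreal (\<tau> P)"
    and \<tau>: "(\<tau> \<longlongrightarrow> 0) at_top" "\<And>P. 0 \<le> \<tau> P"
  shows "(\<lambda>n. mass_fn (fs n) r) \<longlonglongrightarrow> mass_fn g r"
proof (rule tendsto_if_approximations)
  fix \<epsilon> :: real assume "0 < \<epsilon>"
  then have "eventually (\<lambda>P. P1 \<le> P \<and> \<tau> P < \<epsilon>) at_top"
    using order_tendstoD(2)[OF \<tau>(1)] eventually_ge_at_top by (auto intro: eventually_conj)
  then obtain P where P: "P1 \<le> P" "\<tau> P < \<epsilon>"
    by (auto dest: eventually_happens)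
  have "(\<lambda>n. \<integral>z. fs n z * mass_test r P z \<partial>lebesgue) \<longlonglongrightarrow> (\<integral>z. f0 z * mass_test r P z \<partial>lebesgue)"
    using mass_test_bounded[of r P]
    by (intro weak_Lp_conv_tendsto_integral[OF weak p integrable_mass_test,
          where C = "sqrt (1 + (P + 1)\<^sup>2)"])
      auto
  moreover have "(\<integral>z. f0 z * mass_test r P z \<partial>lebesgue) = (\<integral>z. g z * mass_test r P z \<partial>lebesgue)"
  proof (rule integral_cong_AE)
    have "f0 \<in> borel_measurable lebesgue"
      using weak unfolding weak_Lp_conv_def in_Lp_def by blast
    then show "(\<lambda>z. f0 z * mass_test r P z) \<in> borel_measurable lebesgue"
      unfolding mass_test_def by measurable
    show "(\<lambda>z. g z * mass_test r P z) \<in> borel_measurable lebesgue"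
      using g(1) unfolding mass_test_def by measurable
    show "AE z in lebesgue. f0 z * mass_test r P z = g z * mass_test r P z"
      using g_f0 by eventually_elim simp
  qed
  moreover have "\<bar>mass_fn (fs n) r - (\<integral>z. fs n z * mass_test r P z \<partial>lebesgue)\<bar> \<le> \<epsilon>" for n
    using mass_fn_approx[where r = r and f = "fs n", OF fs(1,2,3) tail(1)[OF P(1)] \<tau>(2)] P(2)
    by linarith
  moreover have "\<bar>mass_fn g r - (\<integral>z. g z * mass_test r P z \<partial>lebesgue)\<bar> \<le> \<epsilon>"
    using mass_fn_approx[where r = r, OF g tail(2)[OF P(1)] \<tau>(2)] P(2) by linarith
  ultimately show "\<exists>a b. a \<longlonglongrightarrow> b \<and> (\<forall>n. \<bar>mass_fn (fs n) r - a n\<bar> \<le> \<epsilon>) \<and> \<bar>mass_fn g r - b\<bar> \<le> \<epsilon>"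
    by auto
qed

lemma mass_fn_le_total_mass:
  assumes "\<And>z. 0 \<le> f z" "total_mass f \<le> ennreal M" "0 \<le> M"
  shows "mass_fn f r \<le> M"
proof -
  have "(\<integral>\<^sup>+z. ennreal (indicator {z. norm (fst z) \<le> r} z * sqrt (1 + (norm (snd z))\<^sup>2) * f z)
      \<partial>lebesgue)
      \<le> total_mass f"
    unfolding total_mass_def using assms(1)
    by (intro nn_integral_mono ennreal_leI) (auto split: split_indicator)
  then show ?thesis
    unfolding mass_fn_def using assms by (intro enn2real_leI) auto
qed

lemma mass_fn_le_ball_volume:
  assumes f: "f \<in> borel_measurable lebesgue" and rho: "\<And>x. rho f x \<le> ennreal \<sigma>"
    and \<sigma>: "0 \<le> \<sigma>" and r: "0 \<le> r"
  shows "mass_fn f r \<le> \<sigma> * (4 / 3 * pi * r ^ 3)"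
proof -
  let ?h = "\<lambda>z::phase. indicator {z. norm (fst z) \<le> r} z * sqrt (1 + (norm (snd z))\<^sup>2) * f z"
  have "(\<integral>\<^sup>+z. ?h z \<partial>lebesgue) = (\<integral>\<^sup>+x. (\<integral>\<^sup>+v. ?h (x, v) \<partial>lebesgue) \<partial>lebesgue)"
    using f by (intro nn_integral_lebesgue_pair) measurable
  also have "\<dots> \<le> (\<integral>\<^sup>+x. ennreal \<sigma> * indicator (cball (0::real^3) r) x \<partial>lebesgue)"
    using rho by (intro nn_integral_mono) (auto simp: rho_def split: split_indicator)
  also have "\<dots> = ennreal \<sigma> * emeasure lborel (cball (0::real^3) r)"
    by (simp add: nn_integral_completion nn_integral_cmult_indicator)
  also have "\<dots> = ennreal (\<sigma> * (4 / 3 * pi * r ^ 3))"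
    using \<sigma> r by (simp add: emeasure_cball unit_ball_vol_3 flip: ennreal_mult)
  finally show ?thesis
    unfolding mass_fn_def using \<sigma> r by (intro enn2real_leI) auto
qed

lemma mass_ratio_le:
  fixes m M r \<beta> \<sigma> :: real
  assumes "m \<le> M" "m \<le> \<sigma> * (4 / 3 * pi * r ^ 3)" "\<sigma> \<le> 3 * \<beta> ^ 3 / (4 * pi * M\<^sup>2)"
    and "0 < M" "0 < \<beta>" "0 < r" "0 \<le> \<sigma>"
  shows "m / r \<le> \<beta>"
proof (cases "M \<le> \<beta> * r")
  case True
  then show ?thesis
    using assms by (simp add: divide_le_eq)
next
  case False
  have "m \<le> 3 * \<beta> ^ 3 / (4 * pi * M\<^sup>2) * (4 / 3 * pi * r ^ 3)"
    using order_trans[OF assms(2) mult_right_mono[OF assms(3)]] assms(6) by simp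
  also have "\<dots> = \<beta> * r * ((\<beta> * r) / M)\<^sup>2"
    using assms by (simp add: field_simps power2_eq_square power3_eq_cube)
  also have "\<dots> \<le> \<beta> * r * 1"
    using False assms
    by (intro mult_left_mono) (auto simp: power_le_one_iff abs_le_iff divide_le_eq)
  finally show ?thesis
    using assms by (simp add: divide_le_eq)
qed

lemma mass_fn_div_le:
  assumes g: "g \<in> borel_measurable lebesgue" "\<And>z. 0 \<le> g z" "total_mass g \<le> ennreal M"
    and rho: "\<And>x. rho g x \<le> ennreal \<sigma>"
    and \<sigma>: "0 \<le> \<sigma>" "\<sigma> \<le> 3 * \<beta> ^ 3 / (4 * pi * M\<^sup>2)"
    and pos: "0 < M" "0 < \<beta>" "0 < r"
  shows "mass_fn g r / r \<le> \<beta>"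
  using mass_ratio_le[OF mass_fn_le_total_mass[OF g(2,3)] mass_fn_le_ball_volume[OF g(1) rho] \<sigma>(2)]
    \<sigma>(1) pos by auto

lemma lambda_fn_tendsto:
  assumes mass: "(\<lambda>n. mass_fn (fs n) r) \<longlonglongrightarrow> mass_fn f r"
    and ratio: "0 < r \<Longrightarrow> mass_fn f r / r \<le> \<beta>" and \<beta>: "\<beta> < 1 / 2" and r: "0 \<le> r"
  shows "(\<lambda>n. lambda_fn (fs n) r) \<longlonglongrightarrow> lambda_fn f r"
proof (cases "r = 0")
  case False
  have "2 * mass_fn f r / r = 2 * (mass_fn f r / r)"
    by simp
  then have "2 * mass_fn f r / r < 1"
    using ratio \<beta> False r by linarith
  then show ?thesis
    unfolding lambda_fn_def using False by (intro tendsto_intros mass) auto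
qed (simp add: lambda_fn_def)

lemma tendsto_two_div_powr_quarter: "((\<lambda>P::real. 2 / P powr (1 / 4)) \<longlongrightarrow> 0) at_top"
  using tendsto_mult_right_zero[OF tendsto_neg_powr[OF _ filterlim_ident, of "- (1 / 4)"], of 2]
  by (simp add: powr_minus_divide)

theorem lemma2p1:
  fixes k M \<beta> \<sigma>0 P0 :: real
    and fs :: "nat \<Rightarrow> phase \<Rightarrow> real" and f0 :: "phase \<Rightarrow> real"
  assumes k: "k > 0" and M: "M > 0" and \<beta>: "0 < \<beta>" "\<beta> < 1/2"
    and \<sigma>0: "0 < \<sigma>0" "\<sigma>0 \<le> min 1 (3 * \<beta> ^ 3 / (4 * pi * M\<^sup>2))"
    and P0: "P0 = max (max 10 (((1 + M) / (4 * pi)) powr (4/3)))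
                      (max (64 * (k + 1)\<^sup>2 / (1 - 2 * \<beta>))
                           (256 * (k + 1)\<^sup>2 * M ^ 4 / (1 - 2 * \<beta>)\<^sup>2))"
    and adm: "\<And>n. admissible M \<sigma>0 (fs n)"
    and minimizing: "(\<lambda>n. Dfun k (fs n)) \<longlonglongrightarrow> (INF g \<in> {g. admissible M \<sigma>0 g}. Dfun k g)"
    and bounds: "\<And>n z. 0 \<le> fs n z \<and> fs n z \<le> 1"
    and tail: "\<And>n P. P \<ge> P0 + 1 \<Longrightarrow>
       (\<integral>\<^sup>+ z. ennreal (indicator {z. norm (snd z) \<ge> P + 1} z
            * sqrt (1 + (norm (snd z))\<^sup>2) * fs n z) \<partial>lebesgue) \<le> ennreal (2 / P powr (1/4))"
    and weak: "weak_Lp_conv (1 + 1 / k) fs f0"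
  shows "\<exists>g. g \<in> borel_measurable lebesgue \<and> (AE z in lebesgue. g z = f0 z) \<and>
     (\<forall>z. 0 \<le> g z \<and> g z \<le> 1) \<and>
     spherically_symmetric g \<and>
     (\<forall>P\<ge>P0 + 1. (\<integral>\<^sup>+ z. ennreal (indicator {z. norm (snd z) \<ge> P + 1} z
            * sqrt (1 + (norm (snd z))\<^sup>2) * g z) \<partial>lebesgue) \<le> ennreal (2 / P powr (1/4))) \<and>
     (\<forall>r\<ge>0. (\<lambda>n. mass_fn (fs n) r) \<longlonglongrightarrow> mass_fn g r) \<and>
     (\<forall>r>0. mass_fn g r / r \<le> \<beta>) \<and>
     (\<forall>x. rho g x \<le> ennreal \<sigma>0) \<and>
     (\<forall>r\<ge>0. (\<lambda>n. lambda_fn (fs n) r) \<longlonglongrightarrow> lambda_fn g r)"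
proof -
  (* The minimizing property, the value of P0 and sigma0 <= 1 are not needed here. *)
  have p: "1 < 1 + 1 / k"
    using k by simp
  have fs: "fs n \<in> borel_measurable lebesgue" "spherically_symmetric (fs n)"
      "total_mass (fs n) \<le> ennreal M" "rho (fs n) x \<le> ennreal \<sigma>0" for n x
    using adm[of n] unfolding admissible_def total_mass_def by auto
  have fs_tail: "tail_mass (fs n) P \<le> ennreal (2 / P powr (1 / 4))" if "P0 + 1 \<le> P" for n P
    using tail[OF that] unfolding tail_mass_def .
  obtain g where g: "g \<in> borel_measurable lebesgue" "AE z in lebesgue. g z = f0 z"
      "\<And>z. 0 \<le> g z \<and> g z \<le> 1" "spherically_symmetric g" "total_mass g \<le> ennreal M"
      "\<And>x. rho g x \<le> ennreal \<sigma>0" "\<And>P. P0 + 1 \<le> P \<Longrightarrow> tail_mass g P \<le> ennreal (2 / P powr (1 / 4))"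
    using weak_limit_symmetric_representative[OF weak p bounds fs(1-3) less_imp_le[OF M] fs(4)
        fs_tail]
    by blast
  have finite: "total_mass (fs n) < \<infinity>" "total_mass g < \<infinity>" for n
    using le_less_trans[OF fs(3) ennreal_less_top] le_less_trans[OF g(5) ennreal_less_top] by auto
  have mass: "(\<lambda>n. mass_fn (fs n) r) \<longlonglongrightarrow> mass_fn g r" for r
    using bounds g(3)
    by (intro mass_fn_tendsto[OF weak p fs(1) _ finite(1) g(1) _ finite(2) g(2) fs_tail g(7)
          tendsto_two_div_powr_quarter]) auto
  have ratio: "mass_fn g r / r \<le> \<beta>" if "0 < r" for r
    by (rule mass_fn_div_le[OF g(1) _ g(5,6)]) (use g(3) \<sigma>0 M \<beta> that in auto)
  show ?thesis
    using g(1-4,6) g(7)[unfolded tail_mass_def] mass ratio lambda_fn_tendsto[OF mass ratio \<beta>(2)]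
    by (intro exI[of _ g]) blast
qed

end
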